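(* For all $n\geq1$ and $i,j\in I$ one has $C^{(n)}_{-i,-j}=(-1)^{n-1}C^{(n)}_{ij}$. Moreover, for every $n\geq 1$ the element $c_n=\sum_{i\in I}C^{(n)}_{ii}$ is even and lies in the center of $U(\mathfrak{q}(N))$ (it commutes with every element of $U(\mathfrak{q}(N))$), and $c_n=0$ whenever $n$ is even.
   Context: Let $N\geq1$ and let $I=\{-N,\dots,-1,1,\dots,N\}$; all indices below range over $I$ unless stated otherwise. For $k\in I$ put $\bar k=0$ if $k>0$ and $\bar k=1$ if $k<0$. The Lie superalgebra $\mathfrak{q}(N)$ over $\mathbb{C}$ is the subalgebra of $\mathfrak{gl}(N|N)$ (with standard basis $E_{ij}$, $i,j\in I$, $E_{ij}$ of parity $\bar\imath+\bar\jmath$) spanned by $F_{ij}=E_{ij}+E_{-i,-j}$; thus $F_{-i,-j}=F_{ij}$, the $2N^2$ elements $F_{ij}$ with $i>0$ form a basis, $F_{ij}$ has parity $\bar\imath+\bar\jmath \bmod 2$, and $$[F_{ij}, F_{kl}] = \delta_{kj} F_{il} - (-1)^{(\bar{\imath}+ \bar{\jmath})(\bar{k} + \bar{l})} \delta_{il} F_{kj} + \delta_{k,-j} F_{-i,l} - (-1)^{(\bar{\imath} + \bar{\jmath})(\bar{k} + \bar{l})} \delta_{-i,l} F_{k,-j}.$$ For $n\geq1$ define elements of $U(\mathfrak{q}(N))$ by $$C^{(n)}_{ij} = \sum_{k_1,\ldots,k_{n-1}\in I}F_{ik_1} (-1)^{\bar{k}_1} F_{k_1k_2} (-1)^{\bar{k}_2}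 \cdots F_{k_{n-2}k_{n-1}} (-1)^{\bar{k}_{n-1}} F_{k_{n-1}j}$$ (so $C^{(1)}_{ij}=F_{ij}$), and $c_n=\sum_{i\in I}C^{(n)}_{ii}$. *)

theory Defs
  imports Complex_Main "HOL-Library.Function_Algebras"
begin

text \<open>Concrete model of U(q(N)): the free associative algebra over the complex numbers
on the basis symbols (i,j) (i > 0, j in I) of q(N), realised as finitely supported
functions from words to complex numbers, modulo the two-sided ideal generated by the
relations x y - (-1)^(|x||y|) y x - [x,y] for basis elements x, y.
Addition/subtraction are pointwise; the algebra product is fmul (NOT pointwise times).\<close>

type_synonym gen = "int \<times> int"
type_synonym fa = "gen list \<Rightarrow> complex"

definition idx :: "nat \<Rightarrow> int set" where
  "idx N = {k. k \<noteq> 0 \<and> \<bar>k\<bar> \<le> int N}"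

definition par :: "int \<Rightarrow> nat" where
  "par k = (if k < 0 then 1 else 0)"

definition basis :: "nat \<Rightarrow> gen set" where
  "basis N = {(i, j). 0 < i \<and> i \<le> int N \<and> j \<in> idx N}"

definition canon :: "int \<Rightarrow> int \<Rightarrow> gen" where
  "canon i j = (if 0 < i then (i, j) else (- i, - j))"

definition mono :: "gen list \<Rightarrow> fa" where
  "mono u = (\<lambda>w. if w = u then 1 else 0)"

text \<open>The element F_ij (note F_{-i,-j} = F_ij by construction).\<close>
definition F :: "int \<Rightarrow> int \<Rightarrow> fa" where
  "F i j = mono [canon i j]"

definition smul :: "complex \<Rightarrow> fa \<Rightarrow> fa" where
  "smul c p = (\<lambda>w. c * p w)"

definition fmul :: "fa \<Rightarrow> fa \<Rightarrow> fa" where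
  "fmul p q = (\<lambda>w. \<Sum>k\<in>{0..length w}. p (take k w) * q (drop k w))"

definition sgn_pp :: "int \<Rightarrow> int \<Rightarrow> int \<Rightarrow> int \<Rightarrow> complex" where
  "sgn_pp i j k l = (-1) ^ ((par i + par j) * (par k + par l))"

definition br :: "int \<Rightarrow> int \<Rightarrow> int \<Rightarrow> int \<Rightarrow> fa" where
  "br i j k l =
     (if k = j then F i l else 0)
   - smul (sgn_pp i j k l) (if i = l then F k j else 0)
   + (if k = - j then F (- i) l else 0)
   - smul (sgn_pp i j k l) (if - i = l then F k (- j) else 0)"

definition relator :: "int \<Rightarrow> int \<Rightarrow> int \<Rightarrow> int \<Rightarrow> fa" where
  "relator i j k l = fmul (F i j) (F k l) - smul (sgn_pp i j k l) (fmul (F k l) (F i j)) - br i j k l"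

inductive_set J :: "nat \<Rightarrow> fa set" for N :: nat where
  J_zero: "0 \<in> J N"
| J_add: "x \<in> J N \<Longrightarrow> y \<in> J N \<Longrightarrow> x + y \<in> J N"
| J_smul: "x \<in> J N \<Longrightarrow> smul c x \<in> J N"
| J_gen: "(i, j) \<in> basis N \<Longrightarrow> (k, l) \<in> basis N \<Longrightarrow>
           fmul (fmul (mono u) (relator i j k l)) (mono v) \<in> J N"

definition FA :: "nat \<Rightarrow> fa set" where
  "FA N = {a. finite {w. a w \<noteq> 0} \<and> (\<forall>w. a w \<noteq> 0 \<longrightarrow> set w \<subseteq> basis N)}"

definition wpar :: "gen list \<Rightarrow> nat" where
  "wpar w = (\<Sum>g\<leftarrow>w. par (fst g) + par (snd g))"

definition even_elem :: "fa \<Rightarrow> bool" where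
  "even_elem x = (\<forall>w. x w \<noteq> 0 \<longrightarrow> even (wpar w))"

fun C :: "nat \<Rightarrow> nat \<Rightarrow> int \<Rightarrow> int \<Rightarrow> fa" where
  "C N 0 i j = 0"
| "C N (Suc 0) i j = F i j"
| "C N (Suc (Suc n)) i j =
     (\<Sum>k\<in>idx N. fmul (C N (Suc n) i k) (smul ((-1) ^ par k) (F k j)))"

definition cc :: "nat \<Rightarrow> nat \<Rightarrow> fa" where
  "cc N n = (\<Sum>i\<in>idx N. C N n i i)"

end

theory Submission
  imports Defs
begin

text \<open>Put \<open>theta k = (-1)^(par k)\<close>. Substituting \<open>k \<mapsto> -k\<close> in the sum defining \<open>C\<^sup>(\<^sup>n\<^sup>)\<close>
and using \<open>F (-i) (-j) = F i j\<close> and \<open>theta (-k) = - theta k\<close> gives the sign symmetry of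
\<open>C\<^sup>(\<^sup>n\<^sup>)\<close>; taking traces, \<open>c\<^sub>n = (-1)^(n-1) c\<^sub>n\<close>, so \<open>c\<^sub>n = 0\<close> for even \<open>n\<close>.
Every monomial of \<open>C\<^sup>(\<^sup>n\<^sup>)\<^sub>i\<^sub>j\<close> has parity \<open>par i + par j\<close>, so \<open>c\<^sub>n\<close> is even.
For centrality one shows by induction on \<open>n\<close>, via the super Leibniz rule, that the
supercommutator \<open>[F\<^sub>a\<^sub>b, C\<^sup>(\<^sup>n\<^sup>)\<^sub>i\<^sub>j]\<close> is given by the four Kronecker-delta terms of
\<open>[F\<^sub>a\<^sub>b, F\<^sub>i\<^sub>j]\<close> with \<open>F\<close> replaced by \<open>C\<^sup>(\<^sup>n\<^sup>)\<close>. On the diagonal \<open>i = j\<close> these terms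
cancel in pairs after summation, so \<open>c\<^sub>n\<close> commutes with the generators and hence with
every element of \<open>U(q(N))\<close>.\<close>

subsection \<open>The free algebra\<close>

lemma sum_apply: "(sum f S) w = (\<Sum>k\<in>S. f k w)" for f :: "'b \<Rightarrow> fa"
  by (induction S rule: infinite_finite_induct) auto

lemma fmul_assoc: "fmul (fmul p q) r = fmul p (fmul q r)"
proof (rule ext)
  fix w :: "gen list"
  define L where "L = length w"
  define g where "g = (\<lambda>m t. p (take m w) * q (take t (drop m w)) * r (drop (m+t) w))"
  have "fmul (fmul p q) r w = (\<Sum>k\<le>L. \<Sum>m\<le>k. g m (k - m))"
    unfolding fmul_def g_def L_def atLeast0AtMost
    by (auto simp: sum_distrib_right min_def drop_take intro!: sum.cong)
  also have "\<dots> = (\<Sum>(m,t)\<in>{(m,t). m+t \<le> L}. g m t)"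
    by (rule sum.triangle_reindex_eq[symmetric])
  also have "\<dots> = (\<Sum>m\<le>L. \<Sum>t\<le>L - m. g m t)"
  proof -
    have "{(m,t). m+t \<le> L} = Sigma {..L} (\<lambda>m. {..L-m})" by auto
    then show ?thesis by (simp add: sum.Sigma)
  qed
  also have "\<dots> = fmul p (fmul q r) w"
    unfolding fmul_def g_def L_def atLeast0AtMost
    by (auto simp: sum_distrib_left mult.assoc add.commute intro!: sum.cong)
  finally show "fmul (fmul p q) r w = fmul p (fmul q r) w" .
qed

lemma fmul_add_left: "fmul (x + y) z = fmul x z + fmul y z"
  by (auto simp: fmul_def fun_eq_iff distrib_right sum.distrib)

lemma fmul_add_right: "fmul z (x + y) = fmul z x + fmul z y"
  by (auto simp: fmul_def fun_eq_iff distrib_left sum.distrib)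

lemma fmul_diff_left: "fmul (x - y) z = fmul x z - fmul y z"
  by (auto simp: fmul_def fun_eq_iff left_diff_distrib sum_subtractf)

lemma fmul_diff_right: "fmul z (x - y) = fmul z x - fmul z y"
  by (auto simp: fmul_def fun_eq_iff right_diff_distrib sum_subtractf)

lemma fmul_zero_left [simp]: "fmul 0 z = 0"
  by (auto simp: fmul_def fun_eq_iff)

lemma fmul_zero_right [simp]: "fmul z 0 = 0"
  by (auto simp: fmul_def fun_eq_iff)

lemma fmul_smul_left: "fmul (smul c x) z = smul c (fmul x z)"
  by (auto simp: fmul_def smul_def fun_eq_iff sum_distrib_left mult.assoc)

lemma fmul_smul_right: "fmul z (smul c x) = smul c (fmul z x)"
  by (auto simp: fmul_def smul_def fun_eq_iff sum_distrib_left mult.left_commute)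

lemma fmul_sum_left: "fmul (\<Sum>k\<in>S. f k) z = (\<Sum>k\<in>S. fmul (f k) z)"
  by (simp add: fun_eq_iff fmul_def sum_apply sum_distrib_right sum.swap[of _ S])

lemma fmul_sum_right: "fmul z (\<Sum>k\<in>S. f k) = (\<Sum>k\<in>S. fmul z (f k))"
  by (simp add: fun_eq_iff fmul_def sum_apply sum_distrib_left sum.swap[of _ S])

lemma smul_add: "smul c (x + y) = smul c x + smul c y"
  by (auto simp: smul_def fun_eq_iff distrib_left)

lemma smul_diff: "smul c (x - y) = smul c x - smul c y"
  by (auto simp: smul_def fun_eq_iff right_diff_distrib)

lemma smul_smul: "smul c (smul d x) = smul (c * d) x"
  by (auto simp: smul_def fun_eq_iff)

lemma smul_zero [simp]: "smul c 0 = 0"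
  by (auto simp: smul_def fun_eq_iff)

lemma smul_one [simp]: "smul 1 x = x"
  by (auto simp: smul_def fun_eq_iff)

lemma smul_minus_one: "smul (-1) x = - x"
  by (auto simp: smul_def fun_eq_iff)

lemma smul_sum: "smul c (\<Sum>k\<in>S. f k) = (\<Sum>k\<in>S. smul c (f k))"
  by (simp add: fun_eq_iff smul_def sum_apply sum_distrib_left)

lemma fmul_mono_mono: "fmul (mono u) (mono v) = mono (u @ v)"
proof (rule ext)
  fix w
  have split: "(take k w = u \<and> drop k w = v) \<longleftrightarrow> (k = length u \<and> w = u @ v)"
    if "k \<le> length w" for k
    using that by (metis append_eq_conv_conj append_take_drop_id length_take min.absorb2)
  have "fmul (mono u) (mono v) w
      = (\<Sum>k\<in>{0..length w}. if k = length u \<and> w = u @ v then 1 else 0)"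
    unfolding fmul_def mono_def by (rule sum.cong) (use split in auto)
  also have "\<dots> = mono (u @ v) w"
    by (auto simp: mono_def)
  finally show "fmul (mono u) (mono v) w = mono (u @ v) w" .
qed

lemma fmul_mono_Nil_left [simp]: "fmul (mono []) x = x"
proof (rule ext)
  fix w
  have "fmul (mono []) x w = (\<Sum>k\<in>{0..length w}. if k = 0 then x w else 0)"
    unfolding fmul_def mono_def by (rule sum.cong) auto
  then show "fmul (mono []) x w = x w" by simp
qed

lemma fmul_mono_Nil_right [simp]: "fmul x (mono []) = x"
proof (rule ext)
  fix w
  have "fmul x (mono []) w = (\<Sum>k\<in>{0..length w}. if k = length w then x w else 0)"
    unfolding fmul_def mono_def by (rule sum.cong) auto
  then show "fmul x (mono []) w = x w" by simp
qed

definition finsupp :: "fa \<Rightarrow> bool" where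
  "finsupp x \<longleftrightarrow> finite {w. x w \<noteq> 0}"

lemma finsupp_expand:
  assumes "finsupp p"
  shows "p = (\<Sum>w\<in>{w. p w \<noteq> 0}. smul (p w) (mono w))"
proof (rule ext)
  fix v
  have "(\<Sum>w\<in>{w. p w \<noteq> 0}. smul (p w) (mono w)) v = (\<Sum>w\<in>{w. p w \<noteq> 0}. if w = v then p w else 0)"
    unfolding sum_apply smul_def mono_def by (rule sum.cong) auto
  also have "\<dots> = p v"
    using assms unfolding finsupp_def by (simp add: sum.delta')
  finally show "p v = (\<Sum>w\<in>{w. p w \<noteq> 0}. smul (p w) (mono w)) v" by simp
qed

lemma finsupp_zero: "finsupp 0"
  by (simp add: finsupp_def)

lemma finsupp_mono: "finsupp (mono u)"
proof -
  have "{w. mono u w \<noteq> 0} = {u}" by (auto simp: mono_def)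
  then show ?thesis by (simp add: finsupp_def)
qed

lemma finsupp_F: "finsupp (F i j)"
  by (simp add: F_def finsupp_mono)

lemma finsupp_smul: "finsupp x \<Longrightarrow> finsupp (smul c x)"
  unfolding finsupp_def smul_def by (rule finite_subset[rotated]) auto

lemma finsupp_add: "finsupp x \<Longrightarrow> finsupp y \<Longrightarrow> finsupp (x + y)"
  unfolding finsupp_def by (rule finite_subset[of _ "{w. x w \<noteq> 0} \<union> {w. y w \<noteq> 0}"]) auto

lemma finsupp_sum: "(\<And>k. k \<in> S \<Longrightarrow> finsupp (f k)) \<Longrightarrow> finsupp (\<Sum>k\<in>S. f k)"
proof (induction S rule: infinite_finite_induct)
  case (insert x S)
  then show ?case by (simp only: sum.insert[OF insert(1,2)]) (intro finsupp_add; simp)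
qed (simp_all add: finsupp_zero)

lemma fmul_nonzero_split:
  assumes "fmul p q w \<noteq> 0"
  obtains k where "p (take k w) \<noteq> 0" "q (drop k w) \<noteq> 0"
proof -
  from assms obtain k where "p (take k w) * q (drop k w) \<noteq> 0"
    unfolding fmul_def by (meson sum.neutral)
  then show ?thesis by (intro that) auto
qed

lemma finsupp_fmul:
  assumes "finsupp p" "finsupp q"
  shows "finsupp (fmul p q)"
proof -
  have "{w. fmul p q w \<noteq> 0} \<subseteq> (\<lambda>(u, v). u @ v) ` ({w. p w \<noteq> 0} \<times> {w. q w \<noteq> 0})"
  proof
    fix w assume "w \<in> {w. fmul p q w \<noteq> 0}"
    then obtain k where "p (take k w) \<noteq> 0" "q (drop k w) \<noteq> 0"
      by (auto elim: fmul_nonzero_split)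
    then show "w \<in> (\<lambda>(u, v). u @ v) ` ({w. p w \<noteq> 0} \<times> {w. q w \<noteq> 0})"
      by (intro image_eqI[of _ _ "(take k w, drop k w)"]) auto
  qed
  moreover have "finite ((\<lambda>(u, v). u @ v) ` ({w. p w \<noteq> 0} \<times> {w. q w \<noteq> 0}))"
    using assms unfolding finsupp_def by simp
  ultimately show ?thesis
    unfolding finsupp_def by (rule finite_subset)
qed

subsection \<open>The ideal of relations\<close>

lemma J_sum: "(\<And>k. k \<in> S \<Longrightarrow> f k \<in> J N) \<Longrightarrow> (\<Sum>k\<in>S. f k) \<in> J N"
  by (induction S rule: infinite_finite_induct) (auto intro: J.intros)

lemma J_uminus: "x \<in> J N \<Longrightarrow> - x \<in> J N"
  using J_smul[of x N "-1"] by (simp add: smul_minus_one)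

lemma J_fmul_left:
  assumes "x \<in> J N" "finsupp p"
  shows "fmul p x \<in> J N"
  using assms(1)
proof induction
  case (J_gen i j k l u v)
  have "fmul p (fmul (fmul (mono u) (relator i j k l)) (mono v))
     = (\<Sum>w\<in>{w. p w \<noteq> 0}. smul (p w) (fmul (fmul (mono (w @ u)) (relator i j k l)) (mono v)))"
    by (subst finsupp_expand[OF assms(2)])
       (simp add: fmul_sum_left fmul_smul_left fmul_assoc fmul_mono_mono[symmetric])
  also have "\<dots> \<in> J N"
    by (intro J_sum J.intros J_gen)
  finally show ?case .
next
  case J_zero
  show ?case by (simp only: fmul_zero_right J.J_zero)
next
  case J_add
  then show ?case by (simp only: fmul_add_right J.J_add)
next
  case J_smul
  then show ?case by (simp only: fmul_smul_right J.J_smul)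
qed

lemma J_fmul_right:
  assumes "x \<in> J N" "finsupp p"
  shows "fmul x p \<in> J N"
  using assms(1)
proof induction
  case (J_gen i j k l u v)
  have "fmul (fmul (fmul (mono u) (relator i j k l)) (mono v)) p
     = (\<Sum>w\<in>{w. p w \<noteq> 0}. smul (p w) (fmul (fmul (mono u) (relator i j k l)) (mono (v @ w))))"
    by (subst arg_cong[where f="fmul _", OF finsupp_expand[OF assms(2)]])
       (simp add: fmul_sum_right fmul_smul_right fmul_assoc fmul_mono_mono)
  also have "\<dots> \<in> J N"
    by (intro J_sum J.intros J_gen)
  finally show ?case .
next
  case J_zero
  show ?case by (simp only: fmul_zero_left J.J_zero)
next
  case J_add
  then show ?case by (simp only: fmul_add_left J.J_add)
next
  case J_smul
  then show ?case by (simp only: fmul_smul_left J.J_smul)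
qed

definition theta :: "int \<Rightarrow> complex" where
  "theta k = (-1) ^ par k"

lemma par_cases: "par k = 0 \<or> par k = 1"
  by (simp add: par_def)

lemma par_uminus: "k \<noteq> 0 \<Longrightarrow> par (- k) = 1 - par k"
  by (simp add: par_def)

lemma theta_uminus: "k \<noteq> 0 \<Longrightarrow> theta (- k) = - theta k"
  by (auto simp: theta_def par_def)

lemma theta_eq: "theta k = (if par k = 0 then 1 else -1)"
  using par_cases[of k] by (auto simp: theta_def)

lemma sgn_pp_eq: "sgn_pp a b i j = (if even ((par a + par b) * (par i + par j)) then 1 else -1)"
  by (simp add: sgn_pp_def)

lemma sgn_pp_mult: "sgn_pp a b i k * sgn_pp a b k j = sgn_pp a b i j"
  unfolding sgn_pp_eq using par_cases[of a] par_cases[of b] par_cases[of i] par_cases[of j] par_cases[of k]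
  by (elim disjE) simp_all

lemma sgn_pp_diag [simp]: "sgn_pp a b i i = 1"
  unfolding sgn_pp_eq using par_cases[of a] par_cases[of b] par_cases[of i]
  by (elim disjE) simp_all

lemma sgn_pp_uminus: "i \<noteq> 0 \<Longrightarrow> j \<noteq> 0 \<Longrightarrow> sgn_pp a b (- i) (- j) = sgn_pp a b i j"
  unfolding sgn_pp_eq using par_cases[of a] par_cases[of b] par_cases[of i] par_cases[of j]
  by (elim disjE) (simp_all add: par_uminus)

lemma sgn_pp_theta_swap: "sgn_pp a b i a * theta a = sgn_pp a b i b * theta b"
  unfolding sgn_pp_eq theta_eq using par_cases[of a] par_cases[of b] par_cases[of i]
  by (elim disjE) simp_all

lemma sgn_pp_theta_swap_uminus:
  "a \<noteq> 0 \<Longrightarrow> b \<noteq> 0 \<Longrightarrow> sgn_pp a b i (- a) * theta (- a) = sgn_pp a b i (- b) * theta (- b)"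
  unfolding sgn_pp_eq theta_eq using par_cases[of a] par_cases[of b] par_cases[of i]
  by (elim disjE) (simp_all add: par_uminus)

lemma idx_uminus: "k \<in> idx N \<Longrightarrow> - k \<in> idx N"
  by (auto simp: idx_def)

lemma idx_nonzero: "k \<in> idx N \<Longrightarrow> k \<noteq> 0"
  by (auto simp: idx_def)

lemma finite_idx: "finite (idx N)"
  by (rule finite_subset[of _ "{- int N..int N}"]) (auto simp: idx_def)

lemma sum_idx_uminus: "sum f (idx N) = sum (\<lambda>k. f (- k)) (idx N)"
  by (rule sum.reindex_bij_witness[where i=uminus and j=uminus]) (auto simp: idx_uminus)

lemma basis_idx:
  assumes "(a, b) \<in> basis N"
  shows "a \<in> idx N" "b \<in> idx N"
  using assms by (auto simp: basis_def idx_def)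

lemma F_uminus: "i \<noteq> 0 \<Longrightarrow> F (- i) (- j) = F i j"
  by (auto simp: F_def canon_def)

lemma F_basis: "(a, b) \<in> basis N \<Longrightarrow> F a b = mono [(a, b)]"
  by (auto simp: F_def canon_def basis_def)

subsection \<open>Symmetry and parity of \<open>C\<^sup>(\<^sup>n\<^sup>)\<close>\<close>

lemma C_Suc_Suc: "C N (Suc (Suc n)) i j = (\<Sum>k\<in>idx N. smul (theta k) (fmul (C N (Suc n) i k) (F k j)))"
  by (simp add: fmul_smul_right theta_def)

lemma finsupp_C: "finsupp (C N n i j)"
proof (induction N n i j rule: C.induct)
  case (3 N n i j)
  show ?case
    unfolding C.simps by (intro finsupp_sum finsupp_fmul finsupp_smul finsupp_F 3)
qed (simp_all only: C.simps finsupp_zero finsupp_F)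

lemma C_uminus:
  "i \<in> idx N \<Longrightarrow> j \<in> idx N \<Longrightarrow> C N (Suc n) (- i) (- j) = smul ((-1) ^ n) (C N (Suc n) i j)"
proof (induction n arbitrary: j)
  case 0
  then show ?case by (simp add: F_uminus idx_nonzero)
next
  case (Suc n)
  have "C N (Suc (Suc n)) (- i) (- j)
      = (\<Sum>k\<in>idx N. smul (theta (- k)) (fmul (C N (Suc n) (- i) (- k)) (F (- k) (- j))))"
    unfolding C_Suc_Suc by (rule sum_idx_uminus)
  also have "\<dots> = (\<Sum>k\<in>idx N. smul ((-1) ^ Suc n) (smul (theta k) (fmul (C N (Suc n) i k) (F k j))))"
    by (rule sum.cong)
       (auto simp: Suc idx_nonzero theta_uminus F_uminus fmul_smul_left smul_smul mult.commute)
  also have "\<dots> = smul ((-1) ^ Suc n) (C N (Suc (Suc n)) i j)"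
    by (simp only: C_Suc_Suc smul_sum)
  finally show ?case .
qed

lemma cc_eq_0_if_even: "even n \<Longrightarrow> cc N n = 0"
proof (cases n)
  case (Suc m)
  assume "even n"
  with Suc have "odd m" by simp
  have "cc N (Suc m) = (\<Sum>i\<in>idx N. C N (Suc m) (- i) (- i))"
    unfolding cc_def by (rule sum_idx_uminus)
  also have "\<dots> = - cc N (Suc m)"
    using \<open>odd m\<close> by (simp add: C_uminus cc_def smul_minus_one sum_negf)
  finally show ?thesis
    using Suc by (simp add: fun_eq_iff)
qed (simp add: cc_def)

definition homogeneous :: "nat \<Rightarrow> fa \<Rightarrow> bool" where
  "homogeneous p x \<longleftrightarrow> (\<forall>w. x w \<noteq> 0 \<longrightarrow> even (wpar w + p))"

lemma homogeneous_cong: "homogeneous p x \<Longrightarrow> even (p + q) \<Longrightarrow> homogeneous q x"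
  unfolding homogeneous_def by (metis add.left_commute even_add)

lemma homogeneous_sum: "(\<And>k. k \<in> S \<Longrightarrow> homogeneous p (f k)) \<Longrightarrow> homogeneous p (\<Sum>k\<in>S. f k)"
  unfolding homogeneous_def sum_apply by (meson sum.neutral)

lemma homogeneous_smul: "homogeneous p x \<Longrightarrow> homogeneous p (smul c x)"
  unfolding homogeneous_def smul_def by simp

lemma homogeneous_fmul:
  assumes "homogeneous p x" "homogeneous q y"
  shows "homogeneous (p + q) (fmul x y)"
  unfolding homogeneous_def
proof (intro allI impI)
  fix w
  assume "fmul x y w \<noteq> 0"
  then obtain k where "x (take k w) \<noteq> 0" "y (drop k w) \<noteq> 0"
    by (rule fmul_nonzero_split)
  then have "even (wpar (take k w) + p)" "even (wpar (drop k w) + q)"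
    using assms unfolding homogeneous_def by auto
  moreover have "wpar w = wpar (take k w) + wpar (drop k w)"
    by (metis append_take_drop_id sum_list_append map_append wpar_def)
  ultimately show "even (wpar w + (p + q))" by simp
qed

lemma homogeneous_F:
  assumes "i \<noteq> 0" "j \<noteq> 0"
  shows "homogeneous (par i + par j) (F i j)"
proof -
  have "even (par (fst (canon i j)) + par (snd (canon i j)) + (par i + par j))"
    using assms by (auto simp: canon_def par_def)
  then show ?thesis
    unfolding homogeneous_def F_def mono_def by (simp add: wpar_def)
qed

lemma homogeneous_C:
  "i \<in> idx N \<Longrightarrow> j \<in> idx N \<Longrightarrow> homogeneous (par i + par j) (C N (Suc n) i j)"
proof (induction n arbitrary: j)
  case 0
  then show ?case by (simp add: homogeneous_F idx_nonzero)
next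
  case (Suc n)
  show ?case
    unfolding C_Suc_Suc
  proof (rule homogeneous_sum)
    fix k
    assume k: "k \<in> idx N"
    have "homogeneous ((par i + par k) + (par k + par j)) (fmul (C N (Suc n) i k) (F k j))"
      using Suc k by (intro homogeneous_fmul homogeneous_F) (auto simp: idx_nonzero)
    then show "homogeneous (par i + par j) (smul (theta k) (fmul (C N (Suc n) i k) (F k j)))"
      by (intro homogeneous_smul) (erule homogeneous_cong, presburger)
  qed
qed

lemma even_elem_cc: "even_elem (cc N n)"
proof (cases n)
  case (Suc m)
  have "homogeneous 0 (cc N (Suc m))"
    unfolding cc_def by (rule homogeneous_sum, rule homogeneous_cong[OF homogeneous_C]) auto
  then show ?thesis
    using Suc by (simp add: homogeneous_def even_elem_def)
qed (simp add: cc_def even_elem_def)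

subsection \<open>Supercommutators with \<open>C\<^sup>(\<^sup>n\<^sup>)\<close>\<close>

lemma br_uminus: "a \<noteq> 0 \<Longrightarrow> i \<noteq> 0 \<Longrightarrow> j \<noteq> 0 \<Longrightarrow> br a b (- i) (- j) = br a b i j"
  using F_uminus[of _ "- _"] by (auto simp: br_def sgn_pp_uminus fun_eq_iff smul_def)

lemma relator_in_J:
  assumes "(a, b) \<in> basis N" "i \<in> idx N" "j \<in> idx N"
  shows "fmul (F a b) (F i j) - smul (sgn_pp a b i j) (fmul (F i j) (F a b)) - br a b i j \<in> J N"
proof (cases "0 < i")
  case True
  then have "(i, j) \<in> basis N" using assms by (auto simp: basis_def idx_def)
  from J_gen[OF assms(1) this, of "[]" "[]"] show ?thesis
    by (simp add: relator_def)
next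
  case False
  then have "(- i, - j) \<in> basis N" using assms by (auto simp: basis_def idx_def)
  moreover have "a \<noteq> 0" using assms by (auto simp: basis_def)
  ultimately show ?thesis
    using J_gen[OF assms(1), of "- i" "- j" "[]" "[]"] assms
    by (simp add: relator_def F_uminus sgn_pp_uminus br_uminus idx_nonzero)
qed

text \<open>The value of \<open>[F\<^sub>a\<^sub>b, C\<^sup>(\<^sup>n\<^sup>)\<^sub>i\<^sub>j]\<close>: the formula of \<open>br\<close> with \<open>F\<close> replaced by \<open>C\<^sup>(\<^sup>n\<^sup>)\<close>.\<close>

definition brC :: "nat \<Rightarrow> nat \<Rightarrow> int \<Rightarrow> int \<Rightarrow> int \<Rightarrow> int \<Rightarrow> fa" where
  "brC N n a b i j =
     (if i = b then C N n a j else 0)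
   - (if a = j then smul (sgn_pp a b i j) (C N n i b) else 0)
   + (if i = - b then C N n (- a) j else 0)
   - (if - a = j then smul (sgn_pp a b i j) (C N n i (- b)) else 0)"

lemma brC_one: "brC N (Suc 0) a b i j = br a b i j"
  by (simp add: brC_def br_def)

text \<open>The super Leibniz rule \<open>[A, Y G] = [A, Y] G \<plusminus> Y [A, G]\<close>, with the claimed values
\<open>X\<close> and \<open>B\<close> of the two supercommutators subtracted.\<close>

lemma supercomm_fmul_right:
  assumes "s\<^sub>1 * s\<^sub>2 = s"
  shows "fmul A (fmul Y (smul t G)) - smul s (fmul (fmul Y (smul t G)) A)
          - (fmul X (smul t G) + smul (s\<^sub>1 * t) (fmul Y B))
       = fmul (fmul A Y - smul s\<^sub>1 (fmul Y A) - X) (smul t G)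
          + smul (s\<^sub>1 * t) (fmul Y (fmul A G - smul s\<^sub>2 (fmul G A) - B))"
  unfolding assms[symmetric]
  by (simp only: fmul_diff_left fmul_diff_right fmul_smul_left fmul_smul_right fmul_assoc
      fmul_add_left fmul_add_right smul_diff smul_smul smul_add)
     (simp add: fun_eq_iff smul_def algebra_simps)

lemma sum_brC_fmul_F:
  assumes "a \<in> idx N"
  shows "(\<Sum>k\<in>idx N. fmul (brC N (Suc n) a b i k) (smul (theta k) (F k j))) =
     (if i = b then C N (Suc (Suc n)) a j else 0)
     - smul (sgn_pp a b i a * theta a) (fmul (C N (Suc n) i b) (F a j))
     + (if i = - b then C N (Suc (Suc n)) (- a) j else 0)
     - smul (sgn_pp a b i (- a) * theta (- a)) (fmul (C N (Suc n) i (- b)) (F (- a) j))"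
proof -
  let ?G = "\<lambda>k. smul (theta k) (F k j)"
  have summand: "fmul (brC N (Suc n) a b i k) (?G k) =
       (if i = b then fmul (C N (Suc n) a k) (?G k) else 0)
     - (if a = k then smul (sgn_pp a b i a * theta a) (fmul (C N (Suc n) i b) (F a j)) else 0)
     + (if i = - b then fmul (C N (Suc n) (- a) k) (?G k) else 0)
     - (if - a = k then smul (sgn_pp a b i (- a) * theta (- a)) (fmul (C N (Suc n) i (- b)) (F (- a) j)) else 0)"
    for k
    unfolding brC_def fmul_diff_left fmul_add_left
    by (auto simp: fmul_smul_left fmul_smul_right smul_smul mult.commute)
  show ?thesis
    unfolding summand sum_subtractf sum.distrib C.simps(3)[folded theta_def]
    using assms idx_uminus[OF assms] by (simp add: finite_idx sum.delta)
qed

lemma sum_C_fmul_br: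
  assumes "b \<in> idx N"
  shows "(\<Sum>k\<in>idx N. smul (sgn_pp a b i k * theta k) (fmul (C N (Suc n) i k) (br a b k j))) =
     smul (sgn_pp a b i b * theta b) (fmul (C N (Suc n) i b) (F a j))
     - (if a = j then smul (sgn_pp a b i j) (C N (Suc (Suc n)) i b) else 0)
     + smul (sgn_pp a b i (- b) * theta (- b)) (fmul (C N (Suc n) i (- b)) (F (- a) j))
     - (if - a = j then smul (sgn_pp a b i j) (C N (Suc (Suc n)) i (- b)) else 0)"
proof -
  have sgn: "sgn_pp a b i k * theta k * sgn_pp a b k j = sgn_pp a b i j * theta k" for k
    using sgn_pp_mult[of a b i k j] by (simp add: algebra_simps)
  have summand: "smul (sgn_pp a b i k * theta k) (fmul (C N (Suc n) i k) (br a b k j)) =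
       (if k = b then smul (sgn_pp a b i b * theta b) (fmul (C N (Suc n) i b) (F a j)) else 0)
     - (if a = j then smul (sgn_pp a b i j) (smul (theta k) (fmul (C N (Suc n) i k) (F k b))) else 0)
     + (if k = - b then smul (sgn_pp a b i (- b) * theta (- b)) (fmul (C N (Suc n) i (- b)) (F (- a) j)) else 0)
     - (if - a = j then smul (sgn_pp a b i j) (smul (theta k) (fmul (C N (Suc n) i k) (F k (- b)))) else 0)"
    for k
    unfolding br_def fmul_diff_right fmul_add_right smul_diff smul_add
    by (auto simp: fmul_smul_left fmul_smul_right smul_smul sgn)
  show ?thesis
    unfolding summand sum_subtractf sum.distrib C_Suc_Suc smul_sum
    using assms idx_uminus[OF assms] by (simp add: finite_idx sum.delta' smul_sum[symmetric])
qed

lemma brC_Suc_Suc: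
  assumes "a \<in> idx N" "b \<in> idx N"
  shows "brC N (Suc (Suc n)) a b i j =
    (\<Sum>k\<in>idx N. fmul (brC N (Suc n) a b i k) (smul (theta k) (F k j))
        + smul (sgn_pp a b i k * theta k) (fmul (C N (Suc n) i k) (br a b k j)))"
  unfolding sum.distrib sum_brC_fmul_F[OF assms(1)] sum_C_fmul_br[OF assms(2)]
  unfolding brC_def[of N "Suc (Suc n)"]
  using sgn_pp_theta_swap[of a b i] sgn_pp_theta_swap_uminus[of a b i] assms
  by (simp add: idx_nonzero algebra_simps)

lemma supercomm_F_C_in_J:
  assumes ab: "(a, b) \<in> basis N"
  shows "i \<in> idx N \<Longrightarrow> j \<in> idx N \<Longrightarrow>
    fmul (F a b) (C N (Suc n) i j) - smul (sgn_pp a b i j) (fmul (C N (Suc n) i j) (F a b))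
      - brC N (Suc n) a b i j \<in> J N"
proof (induction n arbitrary: i j)
  case 0
  then show ?case
    unfolding brC_one C.simps(2) by (rule relator_in_J[OF ab])
next
  case (Suc n)
  let ?G = "\<lambda>k. smul (theta k) (F k j)"
  let ?C = "\<lambda>k. C N (Suc n) i k"
  let ?D = "\<lambda>k. fmul (F a b) (?C k) - smul (sgn_pp a b i k) (fmul (?C k) (F a b)) - brC N (Suc n) a b i k"
  let ?R = "\<lambda>k. fmul (F a b) (F k j) - smul (sgn_pp a b k j) (fmul (F k j) (F a b)) - br a b k j"
  have "fmul (F a b) (C N (Suc (Suc n)) i j)
          - smul (sgn_pp a b i j) (fmul (C N (Suc (Suc n)) i j) (F a b))
          - brC N (Suc (Suc n)) a b i j
      = (\<Sum>k\<in>idx N. fmul (F a b) (fmul (?C k) (?G k))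
          - smul (sgn_pp a b i j) (fmul (fmul (?C k) (?G k)) (F a b))
          - (fmul (brC N (Suc n) a b i k) (?G k)
             + smul (sgn_pp a b i k * theta k) (fmul (?C k) (br a b k j))))"
    unfolding C.simps(3)[folded theta_def] brC_Suc_Suc[OF basis_idx[OF ab]]
      fmul_sum_right fmul_sum_left smul_sum sum_subtractf ..
  also have "\<dots> = (\<Sum>k\<in>idx N. fmul (?D k) (?G k) + smul (sgn_pp a b i k * theta k) (fmul (?C k) (?R k)))"
    by (intro sum.cong refl supercomm_fmul_right sgn_pp_mult)
  also have "\<dots> \<in> J N"
  proof (rule J_sum)
    fix k
    assume "k \<in> idx N"
    then show "fmul (?D k) (?G k) + smul (sgn_pp a b i k * theta k) (fmul (?C k) (?R k)) \<in> J N"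
      by (intro J_add J_smul J_fmul_right J_fmul_left Suc.IH Suc.prems relator_in_J[OF ab]
          finsupp_smul finsupp_F finsupp_C)
  qed
  finally show ?case .
qed

lemma sum_brC_diag: "(a, b) \<in> basis N \<Longrightarrow> (\<Sum>i\<in>idx N. brC N n a b i i) = 0"
  using basis_idx[of a b N] idx_uminus[of a N] idx_uminus[of b N]
  by (simp add: brC_def sum_subtractf sum.distrib finite_idx sum.delta sum.delta')

subsection \<open>Centrality of \<open>c\<^sub>n\<close>\<close>

lemma cc_commute_F:
  assumes "(a, b) \<in> basis N"
  shows "fmul (cc N (Suc n)) (F a b) - fmul (F a b) (cc N (Suc n)) \<in> J N"
proof -
  have "fmul (F a b) (cc N (Suc n)) - fmul (cc N (Suc n)) (F a b)
      = (\<Sum>i\<in>idx N. fmul (F a b) (C N (Suc n) i i) - smul (sgn_pp a b i i) (fmul (C N (Suc n) i i) (F a b))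
           - brC N (Suc n) a b i i) + (\<Sum>i\<in>idx N. brC N (Suc n) a b i i)"
    by (simp add: cc_def fmul_sum_left fmul_sum_right sum_subtractf)
  also have "\<dots> \<in> J N"
    unfolding sum_brC_diag[OF assms] add_0_right by (intro J_sum supercomm_F_C_in_J[OF assms])
  finally show ?thesis
    by (metis J_uminus minus_diff_eq)
qed

lemma commutator_fmul_right:
  "fmul c (fmul g w) - fmul (fmul g w) c = fmul (fmul c g - fmul g c) w + fmul g (fmul c w - fmul w c)"
  by (simp only: fmul_diff_left fmul_diff_right fmul_assoc) (simp add: fun_eq_iff)

lemma cc_commute_mono:
  "set w \<subseteq> basis N \<Longrightarrow> fmul (cc N (Suc n)) (mono w) - fmul (mono w) (cc N (Suc n)) \<in> J N"
proof (induction w)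
  case Nil
  show ?case by (simp only: fmul_mono_Nil_left fmul_mono_Nil_right diff_self J_zero)
next
  case (Cons g w)
  obtain a b where g: "g = (a, b)" by fastforce
  with Cons.prems have ab: "(a, b) \<in> basis N" by simp
  have IH: "fmul (cc N (Suc n)) (mono w) - fmul (mono w) (cc N (Suc n)) \<in> J N"
    using Cons.prems by (intro Cons.IH) simp
  have "fmul (cc N (Suc n)) (fmul (F a b) (mono w)) - fmul (fmul (F a b) (mono w)) (cc N (Suc n)) \<in> J N"
    unfolding commutator_fmul_right
    by (rule J_add[OF J_fmul_right[OF cc_commute_F[OF ab] finsupp_mono] J_fmul_left[OF IH finsupp_F]])
  moreover have "fmul (F a b) (mono w) = mono (g # w)"
    by (simp add: F_basis[OF ab] fmul_mono_mono g)
  ultimately show ?case by (simp only:)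
qed

lemma cc_commute_FA:
  assumes "x \<in> FA N"
  shows "fmul (cc N (Suc n)) x - fmul x (cc N (Suc n)) \<in> J N"
proof -
  have "finsupp x" using assms by (simp add: FA_def finsupp_def)
  then have "fmul (cc N (Suc n)) x - fmul x (cc N (Suc n))
      = (\<Sum>w\<in>{w. x w \<noteq> 0}. smul (x w) (fmul (cc N (Suc n)) (mono w) - fmul (mono w) (cc N (Suc n))))"
    by (subst (1 2) finsupp_expand)
       (simp_all add: fmul_sum_left fmul_sum_right fmul_smul_left fmul_smul_right smul_diff sum_subtractf)
  also have "\<dots> \<in> J N"
    using assms by (intro J_sum J_smul cc_commute_mono) (auto simp: FA_def)
  finally show ?thesis .
qed

theorem mainTheorem2:
  fixes N n :: nat
  assumes "1 \<le> N" and "1 \<le> n"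
  shows "(\<forall>i\<in>idx N. \<forall>j\<in>idx N.
            C N n (- i) (- j) - smul ((-1) ^ (n - 1)) (C N n i j) \<in> J N)
       \<and> (\<exists>x. even_elem x \<and> cc N n - x \<in> J N)
       \<and> (\<forall>a\<in>FA N. fmul (cc N n) a - fmul a (cc N n) \<in> J N)
       \<and> (even n \<longrightarrow> cc N n \<in> J N)"
proof -
  obtain m where n: "n = Suc m"
    using assms(2) by (cases n) auto
  have "\<forall>i\<in>idx N. \<forall>j\<in>idx N. C N n (- i) (- j) - smul ((-1) ^ (n - 1)) (C N n i j) \<in> J N"
    unfolding n using C_uminus J_zero by simp
  moreover have "even_elem (cc N n) \<and> cc N n - cc N n \<in> J N"
    using even_elem_cc J_zero by simp
  moreover have "\<forall>a\<in>FA N. fmul (cc N n) a - fmul a (cc N n) \<in> J N"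
    unfolding n using cc_commute_FA by blast
  moreover have "even n \<longrightarrow> cc N n \<in> J N"
    using cc_eq_0_if_even J_zero by simp
  ultimately show ?thesis by blast
qed

end
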